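(* Let $G$ be a graph on $n$ vertices with a Hamilton cycle $C$, let $k\ge 2$ divide $n$, let $s\ge n/k$, and let $\Pi$ be a noncanonical $(k,s)$-BCP of $G$. If $\Pi$ has a singleton district, then there is a sequence of at most $k-1$ recombination moves (through $(k,s)$-BCPs) that yields a $(k,s)$-BCP with strictly fewer fragments than $\Pi$.
   Context: A $(k,s)$-BCP of a graph $G$ on $n$ vertices is a partition of $V(G)$ into $k$ nonempty sets (districts), each inducing a connected subgraph, with $\big||U|-n/k\big|\le s$ for every district $U$. A recombination move replaces two districts $V_i,V_j$ by two sets $W_i,W_j$ with $W_i\cup W_j=V_i\cup V_j$ such that the result is again a $(k,s)$-BCP (different from the original), other districts unchanged. Given a Hamilton cycle $C$: the partition is canonical if each district consists of consecutive vertices along $C$; a fragment of a district is a maximal subset of it of vertices contiguous along $C$; the number of fragments of a partition is the sum over districts of their numbers of fragments. *)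

theory Defs
  imports Complex_Main "HOL-Library.Disjoint_Sets"
begin

definition graph :: "'a set \<Rightarrow> ('a \<Rightarrow> 'a \<Rightarrow> bool) \<Rightarrow> bool" where
  "graph V E \<longleftrightarrow> finite V \<and> (\<forall>x y. E x y \<longrightarrow> x \<in> V \<and> y \<in> V \<and> x \<noteq> y \<and> E y x)"

definition hamilton_cycle :: "'a set \<Rightarrow> ('a \<Rightarrow> 'a \<Rightarrow> bool) \<Rightarrow> (nat \<Rightarrow> 'a) \<Rightarrow> bool" where
  "hamilton_cycle V E c \<longleftrightarrow> card V \<ge> 3 \<and> bij_betw c {0..<card V} V \<and>
     (\<forall>i < card V. E (c i) (c (Suc i mod card V)))"

definition induced_connected :: "('a \<Rightarrow> 'a \<Rightarrow> bool) \<Rightarrow> 'a set \<Rightarrow> bool" where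
  "induced_connected E U \<longleftrightarrow>
     (\<forall>x\<in>U. \<forall>y\<in>U. (x, y) \<in> (Restr {(a, b). E a b} U)\<^sup>*)"

definition BCP :: "'a set \<Rightarrow> ('a \<Rightarrow> 'a \<Rightarrow> bool) \<Rightarrow> nat \<Rightarrow> real \<Rightarrow> 'a set set \<Rightarrow> bool" where
  "BCP V E k s P \<longleftrightarrow> partition_on V P \<and> card P = k \<and>
     (\<forall>U\<in>P. induced_connected E U \<and> \<bar>real (card U) - real (card V) / real k\<bar> \<le> s)"

definition recomb_move :: "'a set \<Rightarrow> ('a \<Rightarrow> 'a \<Rightarrow> bool) \<Rightarrow> nat \<Rightarrow> real \<Rightarrow> 'a set set \<Rightarrow> 'a set set \<Rightarrow> bool" where
  "recomb_move V E k s P Q \<longleftrightarrow>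
     (\<exists>Vi Vj Wi Wj. Vi \<in> P \<and> Vj \<in> P \<and> Vi \<noteq> Vj \<and> Wi \<union> Wj = Vi \<union> Vj \<and>
        Q = (P - {Vi, Vj}) \<union> {Wi, Wj}) \<and> BCP V E k s Q \<and> Q \<noteq> P"

definition contiguous :: "nat \<Rightarrow> (nat \<Rightarrow> 'a) \<Rightarrow> 'a set \<Rightarrow> bool" where
  "contiguous n c F \<longleftrightarrow> (\<exists>a m. 1 \<le> m \<and> m \<le> n \<and> F = {c ((a + i) mod n) | i. i < m})"

definition canonical :: "'a set \<Rightarrow> (nat \<Rightarrow> 'a) \<Rightarrow> 'a set set \<Rightarrow> bool" where
  "canonical V c P \<longleftrightarrow> (\<forall>U\<in>P. contiguous (card V) c U)"

definition fragments :: "'a set \<Rightarrow> (nat \<Rightarrow> 'a) \<Rightarrow> 'a set \<Rightarrow> 'a set set" where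
  "fragments V c U = {F. F \<subseteq> U \<and> contiguous (card V) c F \<and>
       (\<forall>F'. F \<subseteq> F' \<and> F' \<subseteq> U \<and> contiguous (card V) c F' \<longrightarrow> F' = F)}"

definition num_fragments :: "'a set \<Rightarrow> (nat \<Rightarrow> 'a) \<Rightarrow> 'a set set \<Rightarrow> nat" where
  "num_fragments V c P = (\<Sum>U\<in>P. card (fragments V c U))"

end

theory Submission
  imports Defs
begin

(* Walk along C from a singleton district {u}.  If the district W containing the successor of u
   is an arc of m \<ge> 2 vertices, replacing {u} and W by the arc of m vertices starting at u and the
   singleton at the vertex m steps after u is a recombination move that keeps the number of
   fragments and carries the singleton past W; a singleton W is passed without any move.  The walk
   stops at the first district W that is not an arc.  Merging W with the singleton in front of it
   does not increase the number of fragments, and the union splits into two connected sets with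
   fewer fragments in total than {u} and W: into two arcs if the union is an arc, and otherwise
   into a maximal connected union of its fragments and the fragment joined to it by an edge,
   which by maximality is all that remains.  Each swap passes a different district, neither the
   initial singleton nor the final W, so at most k - 2 swaps precede the final move. *)

lemma successively_iff_nth:
  "successively R xs \<longleftrightarrow> (\<forall>i < length xs - 1. R (xs ! i) (xs ! Suc i))"
proof (induction xs)
  case (Cons x xs)
  then show ?case
    by (cases xs) (auto simp: nth_Cons' less_Suc_eq_0_disj)
qed simp

subsection \<open>Connected sets and recombination\<close>

lemma induced_connected_singleton: "induced_connected E {x}"
  unfolding induced_connected_def by auto

lemma induced_connected_Un:
  assumes A: "induced_connected E A" and B: "induced_connected E B"
    and ab: "a \<in> A" "b \<in> B" "E a b" "E b a"
  shows "induced_connected E (A \<union> B)"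
  unfolding induced_connected_def
proof (intro ballI)
  let ?R = "Restr {(x, y). E x y} (A \<union> B)"
  have inside: "(x, y) \<in> ?R\<^sup>*" if "induced_connected E X" "X \<subseteq> A \<union> B" "x \<in> X" "y \<in> X" for X x y
  proof -
    have "Restr {(x, y). E x y} X \<subseteq> ?R" using \<open>X \<subseteq> A \<union> B\<close> by auto
    then show ?thesis
      using that unfolding induced_connected_def by (blast dest: rtrancl_mono)
  qed
  have "(a, b) \<in> ?R\<^sup>*" "(b, a) \<in> ?R\<^sup>*" using ab by auto
  fix x y assume "x \<in> A \<union> B" "y \<in> A \<union> B"
  then show "(x, y) \<in> ?R\<^sup>*"
    using inside[OF A] inside[OF B] \<open>(a, b) \<in> ?R\<^sup>*\<close> \<open>(b, a) \<in> ?R\<^sup>*\<close> ab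
    by (metis UnE Un_upper1 Un_upper2 rtrancl_trans)
qed

lemma induced_connected_crossing_edge:
  assumes H: "induced_connected E H" and T: "T \<subseteq> H" "t \<in> T" "r \<in> H - T"
  shows "\<exists>x\<in>T. \<exists>y\<in>H - T. E x y"
proof -
  have "y \<in> T \<or> (\<exists>x\<in>T. \<exists>y\<in>H - T. E x y)" if "(t, y) \<in> (Restr {(a, b). E a b} H)\<^sup>*" for y
    using that by (induction rule: rtrancl_induct) (use T in auto)
  then show ?thesis using H T unfolding induced_connected_def by blast
qed

lemma BCP_districtD:
  assumes "BCP V E k s P" "U \<in> P"
  shows "U \<subseteq> V" "U \<noteq> {}" "induced_connected E U"
  using assms unfolding BCP_def partition_on_def by auto

lemma BCP_district_unique:
  assumes "BCP V E k s P" "U \<in> P" "U' \<in> P" "x \<in> U" "x \<in> U'"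
  shows "U = U'"
  using assms unfolding BCP_def partition_on_def disjoint_def by auto

lemma BCP_obtain_district:
  assumes "BCP V E k s P" "x \<in> V"
  obtains U where "U \<in> P" "x \<in> U"
  using assms unfolding BCP_def partition_on_def by auto

lemma new_part_notin_others:
  assumes "partition_on V P" "A \<in> P" "B \<in> P" "T \<subseteq> A \<union> B" "T \<noteq> {}"
  shows "T \<notin> P - {A, B}"
  using assms unfolding partition_on_def disjoint_def by blast

lemma card_recombine:
  assumes "A \<in> P" "B \<in> P" "A \<noteq> B" "T \<noteq> R" "T \<notin> P - {A, B}" "R \<notin> P - {A, B}"
  shows "card (P - {A, B} \<union> {T, R}) = card P"
proof (cases "finite P")
  case True
  have "card {A, B} \<le> card P" using True assms(1,2) by (intro card_mono) auto
  then show ?thesis using True assms by (simp add: card_Diff_subset)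
qed (simp add: assms)

lemma sum_recombine:
  assumes "finite P" "A \<in> P" "B \<in> P" "A \<noteq> B" "T \<noteq> R" "T \<notin> P - {A, B}" "R \<notin> P - {A, B}"
  shows "sum f (P - {A, B} \<union> {T, R}) + f A + f B = sum f P + f T + f R"
proof -
  have "sum f P = sum f (P - {A, B}) + f A + f B"
    using assms by (simp add: sum.subset_diff[of "{A, B}" P] add.assoc)
  then show ?thesis using assms by (simp add: ac_simps)
qed

lemma BCP_recombine:
  assumes P: "BCP V E k s P" and s: "real (card V) / real k \<le> s"
    and AB: "A \<in> P" "B \<in> P" "A \<noteq> B"
    and TR: "T \<union> R = A \<union> B" "T \<inter> R = {}" "T \<noteq> {}" "R \<noteq> {}"
    and conn: "induced_connected E T" "induced_connected E R"
    and small: "card T \<le> card B" "card R \<le> card B"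
  shows "BCP V E k s (P - {A, B} \<union> {T, R})"
proof -
  have part: "partition_on V P" and card: "card P = k"
    and districts: "\<forall>U\<in>P. induced_connected E U \<and> \<bar>real (card U) - real (card V) / real k\<bar> \<le> s"
    using P unfolding BCP_def by auto
  have "partition_on V (P - {A, B} \<union> {T, R})"
  proof (rule partition_onI)
    show "\<Union>(P - {A, B} \<union> {T, R}) = V"
      using partition_onD1[OF part] AB TR(1) by blast
    show "{} \<notin> P - {A, B} \<union> {T, R}"
      using partition_onD3[OF part] TR by auto
    have others: "disjnt Z (A \<union> B)" if "Z \<in> P - {A, B}" for Z
      using partition_onD2[OF part] that AB unfolding disjoint_def disjnt_def by auto
    fix X Y assume "X \<in> P - {A, B} \<union> {T, R}" "Y \<in> P - {A, B} \<union> {T, R}" "X \<noteq> Y"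
    then consider "X \<in> P - {A, B}" "Y \<in> P - {A, B}" | "X \<in> P - {A, B}" "Y \<subseteq> A \<union> B"
      | "X \<subseteq> A \<union> B" "Y \<in> P - {A, B}" | "X = T" "Y = R" | "X = R" "Y = T"
      using TR(1) by auto
    then show "disjnt X Y"
    proof cases
      case 1
      then show ?thesis
        using partition_onD2[OF part] \<open>X \<noteq> Y\<close> by (auto simp: disjoint_def disjnt_def)
    qed (use others TR(2) in \<open>auto simp: disjnt_def\<close>)
  qed
  moreover have "card (P - {A, B} \<union> {T, R}) = k"
  proof -
    have "T \<noteq> R" using TR(2,3) by auto
    moreover have "T \<notin> P - {A, B}" "R \<notin> P - {A, B}"
      using new_part_notin_others[OF part AB(1,2)] TR(1,3,4) by auto
    ultimately show ?thesis using card_recombine[OF AB] card by simp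
  qed
  \<comment> \<open>As \<open>s \<ge> n / k\<close>, the lower balance bound is void, so sets no larger than \<open>B\<close> are balanced.\<close>
  moreover have "\<bar>real (card X) - real (card V) / real k\<bar> \<le> s" if "card X \<le> card B" for X
  proof -
    have "0 \<le> real (card V) / real k" by simp
    then show ?thesis using that s districts AB(2) by (auto simp: abs_le_iff)
  qed
  ultimately show ?thesis
    using districts conn small unfolding BCP_def by auto
qed

lemma card_le_of_split_insert:
  assumes "finite W" "u \<notin> W" "T \<union> R = insert u W" "T \<inter> R = {}" "R \<noteq> {}"
  shows "card T \<le> card W"
proof -
  have "finite (T \<union> R)" using assms(1,3) by simp
  then have "finite T" "finite R" by simp_all
  then have "card T + card R = card (insert u W)"
    using card_Un_disjoint[of T R] assms(3,4) by simp
  also have "\<dots> = card W + 1" using assms(1,2) by simp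
  finally have "card T + card R = card W + 1" .
  moreover have "card R \<ge> 1" using \<open>finite R\<close> assms(5) by (simp add: Suc_le_eq card_gt_0_iff)
  ultimately show ?thesis by simp
qed

subsection \<open>The Hamilton cycle\<close>

locale hamiltonian_graph =
  fixes V :: "'a set" and E :: "'a \<Rightarrow> 'a \<Rightarrow> bool" and c :: "nat \<Rightarrow> 'a"
  assumes graph: "graph V E" and hamiltonian: "hamilton_cycle V E c"
begin

abbreviation n :: nat where "n \<equiv> card V"

definition succ :: "'a \<Rightarrow> 'a" where
  "succ x = c (Suc (the_inv_into {0..<n} c x) mod n)"

lemma three_le_n: "3 \<le> n"
  using hamiltonian unfolding hamilton_cycle_def by simp

lemma finite_V: "finite V"
  using graph unfolding graph_def by simp

lemma E_sym: "E x y \<Longrightarrow> E y x"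
  using graph unfolding graph_def by simp

lemma bij_c: "bij_betw c {0..<n} V"
  using hamiltonian unfolding hamilton_cycle_def by simp

lemma obtain_index:
  assumes "x \<in> V" obtains a where "a < n" "x = c a"
  using assms bij_c unfolding bij_betw_def by fastforce

lemma succ_pow_c: "a < n \<Longrightarrow> (succ ^^ i) (c a) = c ((a + i) mod n)"
proof (induction i)
  case (Suc i)
  have "inj_on c {0..<n}" using bij_c by (simp add: bij_betw_def)
  moreover have "(a + i) mod n < n" using three_le_n by simp
  ultimately have "succ (c ((a + i) mod n)) = c (Suc ((a + i) mod n) mod n)"
    unfolding succ_def by (simp add: the_inv_into_f_f)
  then show ?case using Suc by (simp add: mod_Suc_eq)
qed simp

lemma c_in: "a < n \<Longrightarrow> c a \<in> V"
  using bij_c by (auto simp: bij_betw_def)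

lemma succ_pow_in: "x \<in> V \<Longrightarrow> (succ ^^ i) x \<in> V"
  using three_le_n by (auto elim!: obtain_index simp: succ_pow_c c_in)

lemma succ_in: "x \<in> V \<Longrightarrow> succ x \<in> V"
  using succ_pow_in[of x 1] by simp

lemma succ_pow_succ: "(succ ^^ i) (succ x) = (succ ^^ Suc i) x"
  by (simp add: funpow_swap1)

lemma succ_pow_inj:
  assumes "x \<in> V" "i < n" "j < n" "(succ ^^ i) x = (succ ^^ j) x"
  shows "i = j"
proof -
  obtain a where a: "a < n" "x = c a" using obtain_index assms(1) .
  have "(a + i) mod n < n" "(a + j) mod n < n" using a by auto
  then have "(a + i) mod n = (a + j) mod n"
    using assms(4) a succ_pow_c bij_c by (auto simp: bij_betw_def dest: inj_onD)
  then show ?thesis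
    using a(1) assms(2,3) by (cases "a + i < n"; cases "a + j < n") (auto simp: le_mod_geq)
qed

lemma succ_pow_surj:
  assumes "x \<in> V" "y \<in> V" obtains j where "j < n" "(succ ^^ j) x = y"
proof -
  obtain a where a: "a < n" "x = c a" using obtain_index assms(1) .
  obtain b where b: "b < n" "y = c b" using obtain_index assms(2) .
  define j where "j = (if a \<le> b then b - a else b + n - a)"
  have "j < n" "(a + j) mod n = b" unfolding j_def using a b by auto
  then show ?thesis using that a b succ_pow_c by auto
qed

lemma succ_inj:
  assumes "x \<in> V" "y \<in> V" "succ x = succ y" shows "x = y"
proof -
  obtain j where j: "j < n" "(succ ^^ j) x = y" using succ_pow_surj assms(1,2) .
  have "(succ ^^ j) (succ x) = (succ ^^ 0) (succ x)"
    using j assms(3) by (metis funpow_swap1 funpow_0)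
  then have "j = 0" using succ_pow_inj[OF succ_in[OF assms(1)]] j(1) three_le_n by simp
  then show ?thesis using j by simp
qed

lemma succ_notin_image: "x \<in> V \<Longrightarrow> W \<subseteq> V \<Longrightarrow> x \<notin> W \<Longrightarrow> succ x \<notin> succ ` W"
  using succ_inj by blast

lemma E_succ:
  assumes "x \<in> V" shows "E x (succ x)"
proof -
  obtain a where a: "a < n" "x = c a" using obtain_index assms .
  then have "succ x = c (Suc a mod n)" using succ_pow_c[of a 1] by simp
  then show ?thesis using hamiltonian a unfolding hamilton_cycle_def by simp
qed

definition arc :: "'a \<Rightarrow> nat \<Rightarrow> 'a set" where
  "arc x m = (\<lambda>i. (succ ^^ i) x) ` {..<m}"

lemma mem_arc_iff: "y \<in> arc x m \<longleftrightarrow> (\<exists>i<m. y = (succ ^^ i) x)"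
  unfolding arc_def by auto

lemma succ_pow_in_arc: "i < m \<Longrightarrow> (succ ^^ i) x \<in> arc x m"
  unfolding arc_def by simp

lemma arc_subset: "x \<in> V \<Longrightarrow> arc x m \<subseteq> V"
  unfolding arc_def using succ_pow_in by auto

lemma arc_mono: "m \<le> m' \<Longrightarrow> arc x m \<subseteq> arc x m'"
  unfolding arc_def by auto

lemma arc_1 [simp]: "arc x (Suc 0) = {x}"
  unfolding arc_def by auto

lemma start_in_arc: "1 \<le> m \<Longrightarrow> x \<in> arc x m"
  using succ_pow_in_arc[of 0 m x] by simp

lemma arc_Suc: "arc x (Suc m) = insert ((succ ^^ m) x) (arc x m)"
  unfolding arc_def by (auto simp: lessThan_Suc)

lemma arc_Suc_succ: "arc x (Suc m) = insert x (arc (succ x) m)"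
  unfolding arc_def lessThan_Suc_eq_insert_0 by (simp add: image_image succ_pow_succ)

lemma arc_add: "arc x (i + j) = arc x i \<union> arc ((succ ^^ i) x) j"
proof (induction j)
  case (Suc j)
  have "(succ ^^ (i + j)) x = (succ ^^ j) ((succ ^^ i) x)"
    by (metis funpow_add add.commute comp_apply)
  then show ?case using Suc by (simp add: arc_Suc)
qed (simp add: arc_def)

lemma card_arc: "x \<in> V \<Longrightarrow> m \<le> n \<Longrightarrow> card (arc x m) = m"
  unfolding arc_def using succ_pow_inj by (subst card_image) (auto intro!: inj_onI)

lemma arc_n:
  assumes "x \<in> V" shows "arc x n = V"
proof
  show "V \<subseteq> arc x n"
    by (metis assms subsetI succ_pow_in_arc succ_pow_surj)
qed (rule arc_subset[OF assms])

lemma start_notin_arc_succ: "x \<in> V \<Longrightarrow> m < n \<Longrightarrow> x \<notin> arc (succ x) m"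
  using succ_pow_inj[of x 0 "Suc _"] by (fastforce simp: mem_arc_iff succ_pow_succ)

lemma arc_split:
  assumes "x \<in> V" "i \<le> L" "L \<le> n"
  shows "arc x i \<union> arc ((succ ^^ i) x) (L - i) = arc x L"
    "arc x i \<inter> arc ((succ ^^ i) x) (L - i) = {}"
proof -
  show "arc x i \<union> arc ((succ ^^ i) x) (L - i) = arc x L"
    using arc_add[of x i "L - i"] assms(2) by simp
  show "arc x i \<inter> arc ((succ ^^ i) x) (L - i) = {}"
  proof (rule ccontr)
    assume "arc x i \<inter> arc ((succ ^^ i) x) (L - i) \<noteq> {}"
    then obtain j j' where j: "j < i" "j' < L - i" "(succ ^^ j) x = (succ ^^ (j' + i)) x"
      by (auto simp: mem_arc_iff funpow_add)
    then have "j = j' + i" using succ_pow_inj[OF assms(1)] assms(2,3) by simp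
    then show False using j(1) by simp
  qed
qed

lemma contiguous_iff_arc:
  "contiguous n c F \<longleftrightarrow> (\<exists>x\<in>V. \<exists>m. 1 \<le> m \<and> m \<le> n \<and> F = arc x m)"
proof
  assume "contiguous n c F"
  then obtain a m where am: "1 \<le> m" "m \<le> n" "F = {c ((a + i) mod n) | i. i < m}"
    unfolding contiguous_def by auto
  have "(succ ^^ i) (c (a mod n)) = c ((a + i) mod n)" for i
    using succ_pow_c[of "a mod n"] three_le_n by (simp add: mod_add_left_eq)
  then have "F = arc (c (a mod n)) m" unfolding am arc_def by auto
  then show "\<exists>x\<in>V. \<exists>m. 1 \<le> m \<and> m \<le> n \<and> F = arc x m"
    using am three_le_n c_in by auto
next
  assume "\<exists>x\<in>V. \<exists>m. 1 \<le> m \<and> m \<le> n \<and> F = arc x m"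
  then obtain x m where xm: "x \<in> V" "1 \<le> m" "m \<le> n" "F = arc x m" by auto
  obtain a where a: "a < n" "x = c a" using obtain_index xm(1) .
  have "F = {c ((a + i) mod n) | i. i < m}" unfolding xm arc_def using succ_pow_c a by auto
  then show "contiguous n c F" unfolding contiguous_def using xm by auto
qed

lemma contiguous_arc: "x \<in> V \<Longrightarrow> 1 \<le> m \<Longrightarrow> m \<le> n \<Longrightarrow> contiguous n c (arc x m)"
  unfolding contiguous_iff_arc by blast

lemma contiguous_singleton: "x \<in> V \<Longrightarrow> contiguous n c {x}"
  using contiguous_arc[of x 1] three_le_n by simp

lemma induced_connected_arc: "x \<in> V \<Longrightarrow> induced_connected E (arc x m)"
proof (induction m)
  case 0
  then show ?case by (simp add: arc_def induced_connected_def)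
next
  case (Suc m)
  show ?case
  proof (cases m)
    case 0
    then show ?thesis by (simp add: induced_connected_singleton)
  next
    case (Suc m')
    have "E ((succ ^^ m') x) ((succ ^^ m) x)"
      using E_succ[OF succ_pow_in[OF \<open>x \<in> V\<close>]] Suc by simp
    moreover have "(succ ^^ m') x \<in> arc x m" using Suc by (simp add: succ_pow_in_arc)
    ultimately have "induced_connected E (arc x m \<union> {(succ ^^ m) x})"
      using E_sym
      by (intro induced_connected_Un[OF Suc.IH[OF Suc.prems] induced_connected_singleton,
            where a = "(succ ^^ m') x" and b = "(succ ^^ m) x"]) auto
    then show ?thesis by (simp add: arc_Suc)
  qed
qed

subsection \<open>Fragments\<close>

lemma fragments_contiguous: "contiguous n c U \<Longrightarrow> fragments V c U = {U}"
  unfolding fragments_def by (intro set_eqI iffI) (blast, auto)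

lemma contiguous_subset_fragment:
  assumes "finite U" "F \<subseteq> U" "contiguous n c F"
  obtains F' where "F' \<in> fragments V c U" "F \<subseteq> F'"
proof -
  let ?C = "{F'. F' \<subseteq> U \<and> contiguous n c F'}"
  have "?C \<subseteq> Pow U" by auto
  then have "finite ?C" using assms(1) by (simp add: finite_subset)
  moreover have "F \<in> ?C" using assms(2,3) by simp
  ultimately obtain F' where F': "F' \<in> ?C" "F \<subseteq> F'" "\<forall>G\<in>?C. F' \<subseteq> G \<longrightarrow> F' = G"
    using finite_has_maximal2[of ?C F] by blast
  then have "F' \<in> fragments V c U" unfolding fragments_def by blast
  then show ?thesis using F'(2) by (rule that)
qed

lemma Union_fragments:
  assumes "U \<subseteq> V" shows "\<Union> (fragments V c U) = U"
proof
  show "\<Union> (fragments V c U) \<subseteq> U" unfolding fragments_def by auto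
  show "U \<subseteq> \<Union> (fragments V c U)"
  proof
    fix x assume "x \<in> U"
    moreover have "finite U" using assms finite_V by (rule finite_subset)
    ultimately obtain F where "F \<in> fragments V c U" "{x} \<subseteq> F"
      using contiguous_subset_fragment[of U "{x}"] contiguous_singleton[of x] assms by auto
    then show "x \<in> \<Union> (fragments V c U)" by auto
  qed
qed

definition run_length :: "'a set \<Rightarrow> 'a \<Rightarrow> nat" where
  "run_length U a = (LEAST j. (succ ^^ j) a \<notin> U)"

lemma succ_pow_in_run: "j < run_length U a \<Longrightarrow> (succ ^^ j) a \<in> U"
  unfolding run_length_def using not_less_Least by blast

lemma arc_run_subset: "arc a (run_length U a) \<subseteq> U"
  using succ_pow_in_run by (auto simp: mem_arc_iff)

lemma run_length:
  assumes "a \<in> V" "\<not> V \<subseteq> U"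
  shows "run_length U a < n" "(succ ^^ run_length U a) a \<notin> U"
    "a \<in> U \<Longrightarrow> 1 \<le> run_length U a"
proof -
  obtain y where "y \<in> V" "y \<notin> U" using assms(2) by auto
  moreover obtain j where "j < n" "(succ ^^ j) a = y" using succ_pow_surj[OF assms(1) \<open>y \<in> V\<close>] .
  ultimately have j: "j < n" "(succ ^^ j) a \<notin> U" by auto
  show stop: "(succ ^^ run_length U a) a \<notin> U"
    unfolding run_length_def using j(2) by (rule LeastI)
  show "run_length U a < n"
    unfolding run_length_def using j by (meson Least_le le_less_trans)
  show "a \<in> U \<Longrightarrow> 1 \<le> run_length U a"
    using stop by (cases "run_length U a") auto
qed

lemma arc_subset_run:
  assumes "a \<in> V" "\<not> V \<subseteq> U" "arc a m \<subseteq> U"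
  shows "arc a m \<subseteq> arc a (run_length U a)"
proof (rule arc_mono, rule ccontr)
  assume "\<not> m \<le> run_length U a"
  then have "(succ ^^ run_length U a) a \<in> U"
    using assms(3) succ_pow_in_arc by (meson not_le subsetD)
  then show False using run_length(2)[OF assms(1,2)] by blast
qed

lemma contiguous_run:
  assumes "U \<subseteq> V" "U \<noteq> V" "a \<in> U"
  shows "contiguous n c (arc a (run_length U a))"
proof -
  have "a \<in> V" "\<not> V \<subseteq> U" using assms by auto
  then show ?thesis using contiguous_arc run_length assms(3) by (simp add: less_imp_le)
qed

lemma contiguous_eq_arc_start:
  assumes "contiguous n c F" "a \<in> F" "a \<notin> succ ` F"
  shows "F = arc a (card F)"
proof -
  obtain b m where bm: "b \<in> V" "m \<le> n" "F = arc b m"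
    using assms(1) contiguous_iff_arc by auto
  obtain i where i: "i < m" "a = (succ ^^ i) b" using assms(2) bm(3) mem_arc_iff by auto
  have "i = 0"
  proof (rule ccontr)
    assume "i \<noteq> 0"
    then obtain i' where "i = Suc i'" using not0_implies_Suc by blast
    then have "a = succ ((succ ^^ i') b)" "(succ ^^ i') b \<in> F"
      using i bm(3) succ_pow_in_arc[of i' m b] by auto
    then show False using assms(3) by blast
  qed
  then show ?thesis using bm i card_arc by simp
qed

lemma run_in_fragments:
  assumes U: "U \<subseteq> V" "U \<noteq> V" and a: "a \<in> U" "a \<notin> succ ` U"
  shows "arc a (run_length U a) \<in> fragments V c U"
proof -
  have aV: "a \<in> V" "\<not> V \<subseteq> U" using a U by auto
  have "F = arc a (run_length U a)"
    if F: "arc a (run_length U a) \<subseteq> F" "F \<subseteq> U" "contiguous n c F" for F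
  proof -
    have "a \<in> F" using F(1) start_in_arc run_length(3)[OF aV a(1)] by blast
    then have "F = arc a (card F)"
      using contiguous_eq_arc_start[OF F(3)] F(2) a(2) by blast
    then have "F \<subseteq> arc a (run_length U a)" using arc_subset_run[OF aV] F(2) by metis
    then show ?thesis using F(1) by blast
  qed
  then show ?thesis
    unfolding fragments_def using arc_run_subset contiguous_run[OF U a(1)] by blast
qed

lemma fragment_eq_run:
  assumes U: "U \<subseteq> V" "U \<noteq> V" and F: "F \<in> fragments V c U"
  obtains a where "a \<in> U" "a \<notin> succ ` U" "F = arc a (run_length U a)"
proof -
  have FU: "F \<subseteq> U" and Fc: "contiguous n c F"
    and Fmax: "\<And>G. F \<subseteq> G \<Longrightarrow> G \<subseteq> U \<Longrightarrow> contiguous n c G \<Longrightarrow> G = F"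
    using F unfolding fragments_def by auto
  obtain b m where bm: "b \<in> V" "1 \<le> m" "m \<le> n" "F = arc b m"
    using Fc contiguous_iff_arc by auto
  have "m \<noteq> n" using bm arc_n FU U by auto
  then have m: "m < n" using bm by simp
  have bU: "b \<in> U" using FU bm start_in_arc by auto
  have b_start: "b \<notin> succ ` U"
  proof
    assume "b \<in> succ ` U"
    then obtain y where y: "y \<in> U" "b = succ y" by auto
    have "arc y (Suc m) = insert y F" using arc_Suc_succ y bm by simp
    moreover have "y \<in> V" using y U by auto
    ultimately have "arc y (Suc m) = F"
      using Fmax contiguous_arc[of y "Suc m"] m y FU by auto
    then show False using card_arc[of y "Suc m"] card_arc[of b m] \<open>y \<in> V\<close> bm m by simp
  qed
  have "F \<subseteq> arc b (run_length U b)" using arc_subset_run[OF bm(1)] FU U bm(4) by blast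
  then have "arc b (run_length U b) = F"
    using Fmax run_in_fragments[OF U bU b_start] unfolding fragments_def by auto
  then show ?thesis using that bU b_start by auto
qed

lemma inj_on_run:
  assumes "U \<subseteq> V" "U \<noteq> V"
  shows "inj_on (\<lambda>a. arc a (run_length U a)) (U - succ ` U)"
proof (rule inj_onI)
  fix a b assume a: "a \<in> U - succ ` U" and b: "b \<in> U - succ ` U"
    and eq: "arc a (run_length U a) = arc b (run_length U b)"
  have "a \<in> V" "\<not> V \<subseteq> U" using a assms by auto
  then have "1 \<le> run_length U a" using run_length(3) a by blast
  then have "a \<in> arc b (run_length U b)" using start_in_arc[of "run_length U a" a] eq by simp
  then obtain i where i: "i < run_length U b" "a = (succ ^^ i) b" using mem_arc_iff by auto
  show "a = b"
  proof (cases i)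
    case (Suc i')
    then have "a = succ ((succ ^^ i') b)" "(succ ^^ i') b \<in> U"
      using i succ_pow_in_run[of i' U b] by auto
    then show ?thesis using a by blast
  qed (use i in simp)
qed

(* A fragment is the run from its first vertex, a vertex of U whose predecessor is not in U. *)
lemma card_fragments:
  assumes "U \<subseteq> V" "U \<noteq> V"
  shows "card (fragments V c U) = card (U - succ ` U)"
proof -
  have "fragments V c U = (\<lambda>a. arc a (run_length U a)) ` (U - succ ` U)"
    using run_in_fragments[OF assms] fragment_eq_run[OF assms] by blast
  then show ?thesis using inj_on_run[OF assms] by (simp add: card_image)
qed

lemma two_le_card_fragments:
  assumes "U \<subseteq> V" "U \<noteq> {}" "\<not> contiguous n c U"
  shows "2 \<le> card (fragments V c U)"
proof -
  have "fragments V c U \<subseteq> Pow U" unfolding fragments_def by auto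
  moreover have "finite U" using assms(1) finite_V by (rule finite_subset)
  ultimately have "finite (fragments V c U)" by (simp add: finite_subset)
  moreover have "fragments V c U \<noteq> {}"
    using Union_fragments[OF assms(1)] assms(2) by auto
  moreover have "card (fragments V c U) \<noteq> 1"
  proof
    assume "card (fragments V c U) = 1"
    then obtain F where "fragments V c U = {F}" by (auto simp: card_1_singleton_iff)
    then have "F = U" "F \<in> fragments V c U" using Union_fragments[OF assms(1)] by auto
    then show False using assms(3) unfolding fragments_def by simp
  qed
  ultimately have "0 < card (fragments V c U)" "card (fragments V c U) \<noteq> 1"
    by (simp_all add: card_gt_0_iff)
  then show ?thesis by arith
qed

lemma obtain_run:
  assumes "U \<subseteq> V" "U \<noteq> V" "x \<in> U"
  obtains a where "a \<in> U" "a \<notin> succ ` U" "x \<in> arc a (run_length U a)"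
proof -
  obtain F where "F \<in> fragments V c U" "x \<in> F"
    using Union_fragments[OF assms(1)] assms(3) by blast
  then obtain a where "a \<in> U" "a \<notin> succ ` U" "F = arc a (run_length U a)"
    using fragment_eq_run[OF assms(1,2)] by blast
  then show ?thesis using that \<open>x \<in> F\<close> by blast
qed

(* T is a union of fragments of H. *)
definition saturated :: "'a set \<Rightarrow> 'a set \<Rightarrow> bool" where
  "saturated H T \<longleftrightarrow> (\<forall>x\<in>H. succ x \<in> H \<longrightarrow> (x \<in> T \<longleftrightarrow> succ x \<in> T))"

lemma saturated_Diff: "saturated H T \<Longrightarrow> saturated H (H - T)"
  unfolding saturated_def by auto

lemma saturated_Un: "saturated H T \<Longrightarrow> saturated H S \<Longrightarrow> saturated H (T \<union> S)"
  unfolding saturated_def by auto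

lemma saturated_run:
  assumes H: "H \<subseteq> V" "H \<noteq> V" and a: "a \<in> H" "a \<notin> succ ` H"
  shows "saturated H (arc a (run_length H a))"
  unfolding saturated_def
proof (intro ballI impI)
  fix x assume x: "x \<in> H" "succ x \<in> H"
  have aV: "a \<in> V" "\<not> V \<subseteq> H" using a H by auto
  show "x \<in> arc a (run_length H a) \<longleftrightarrow> succ x \<in> arc a (run_length H a)"
  proof
    assume "x \<in> arc a (run_length H a)"
    then obtain i where i: "i < run_length H a" "x = (succ ^^ i) a" using mem_arc_iff by auto
    then have "(succ ^^ Suc i) a \<in> H" using x(2) by simp
    then have "Suc i \<noteq> run_length H a" using run_length(2)[OF aV] by metis
    then show "succ x \<in> arc a (run_length H a)" using i succ_pow_in_arc[of "Suc i"] by simp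
  next
    assume "succ x \<in> arc a (run_length H a)"
    then obtain i where i: "i < run_length H a" "succ x = (succ ^^ i) a" using mem_arc_iff by auto
    then obtain i' where i': "i = Suc i'" using a(2) x(1) by (cases i) auto
    then have "x = (succ ^^ i') a"
      using i x H aV succ_inj[of x "(succ ^^ i') a"] succ_pow_in by auto
    then show "x \<in> arc a (run_length H a)" using i i' succ_pow_in_arc[of i'] by simp
  qed
qed

lemma run_subset_saturated:
  assumes S: "saturated H S" and j: "j < run_length H a" "(succ ^^ j) a \<in> S"
  shows "arc a (run_length H a) \<subseteq> S"
proof -
  have "(succ ^^ i) a \<in> S \<longleftrightarrow> a \<in> S" if "i < run_length H a" for i
    using that
  proof (induction i)
    case (Suc i)
    then have "(succ ^^ i) a \<in> H" "succ ((succ ^^ i) a) \<in> H"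
      using succ_pow_in_run[of i H a] succ_pow_in_run[of "Suc i" H a] by simp_all
    then show ?case using Suc S unfolding saturated_def by simp
  qed simp
  then show ?thesis using j by (auto simp: mem_arc_iff)
qed

lemma starts_saturated:
  assumes "saturated H T" "T \<subseteq> H"
  shows "T - succ ` T = T - succ ` H"
  using assms unfolding saturated_def by auto

lemma card_fragments_saturated:
  assumes H: "H \<subseteq> V" "H \<noteq> V" and T: "T \<subseteq> H" "saturated H T"
  shows "card (fragments V c T) + card (fragments V c (H - T)) = card (fragments V c H)"
proof -
  have "finite H" using H(1) finite_V by (rule finite_subset)
  then have "card (T - succ ` H) + card (H - T - succ ` H)
      = card (T - succ ` H \<union> (H - T - succ ` H))"
    using T(1) by (intro card_Un_disjoint[symmetric]) (auto intro: finite_subset)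
  also have "T - succ ` H \<union> (H - T - succ ` H) = H - succ ` H" using T(1) by auto
  finally have "card (T - succ ` H) + card (H - T - succ ` H) = card (H - succ ` H)" .
  moreover have "T - succ ` T = T - succ ` H" "H - T - succ ` (H - T) = H - T - succ ` H"
    using starts_saturated T saturated_Diff by blast+
  moreover have "T \<subseteq> V" "T \<noteq> V" "H - T \<subseteq> V" "H - T \<noteq> V" using H T(1) by auto
  ultimately show ?thesis using H card_fragments by simp
qed

lemma adjacent_run:
  assumes H: "H \<subseteq> V" "H \<noteq> V" "induced_connected E H"
    and T: "T \<subseteq> H" "T \<noteq> {}" "T \<noteq> H" "saturated H T" "induced_connected E T"
  obtains C where "C \<subseteq> H - T" "C \<noteq> {}" "saturated H C" "induced_connected E C"
    "induced_connected E (T \<union> C)"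
proof -
  obtain t r where tr: "t \<in> T" "r \<in> H - T" "E t r"
    using induced_connected_crossing_edge[OF H(3) T(1)] T(2,3,1) by blast
  obtain b where b: "b \<in> H" "b \<notin> succ ` H" "r \<in> arc b (run_length H b)"
    using obtain_run[OF H(1,2)] tr(2) by blast
  let ?C = "arc b (run_length H b)"
  obtain j where j: "j < run_length H b" "r = (succ ^^ j) b" using b(3) mem_arc_iff by auto
  have "?C \<subseteq> H - T"
    using run_subset_saturated[OF saturated_Diff[OF T(4)] j(1)] tr(2) j(2) by simp
  moreover have "induced_connected E ?C" using induced_connected_arc b(1) H(1) by blast
  moreover have "induced_connected E (T \<union> ?C)"
    using induced_connected_Un[OF T(5) calculation(2) tr(1) b(3) tr(3) E_sym[OF tr(3)]] .
  ultimately show ?thesis using that saturated_run[OF H(1,2) b(1,2)] b(3) by blast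
qed

lemma saturated_split:
  assumes H: "H \<subseteq> V" "H \<noteq> V" "H \<noteq> {}" "induced_connected E H"
    and nc: "\<not> contiguous n c H"
  obtains T where "T \<subseteq> H" "T \<noteq> {}" "T \<noteq> H" "saturated H T"
    "induced_connected E T" "induced_connected E (H - T)"
proof -
  let ?F = "{T. T \<subseteq> H \<and> T \<noteq> {} \<and> T \<noteq> H \<and> saturated H T \<and> induced_connected E T}"
  obtain x where "x \<in> H" using H(3) by blast
  then obtain a where a: "a \<in> H" "a \<notin> succ ` H" "x \<in> arc a (run_length H a)"
    using obtain_run[OF H(1,2)] by blast
  have "arc a (run_length H a) \<in> ?F"
    using arc_run_subset a saturated_run[OF H(1,2) a(1,2)] induced_connected_arc[of a]
      contiguous_run[OF H(1,2) a(1)] nc H(1) by auto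
  then have ne: "?F \<noteq> {}" by blast
  have "finite ?F"
  proof (rule finite_subset)
    show "?F \<subseteq> Pow H" by auto
    show "finite (Pow H)" using finite_subset[OF H(1) finite_V] by simp
  qed
  from finite_has_maximal[OF this ne]
  obtain T where T: "T \<in> ?F" and T_max: "\<forall>T'\<in>?F. T \<subseteq> T' \<longrightarrow> T = T'"
    by (rule bexE)
  then have TH: "T \<subseteq> H" "T \<noteq> {}" "T \<noteq> H" "saturated H T" "induced_connected E T" by auto
  obtain C where C: "C \<subseteq> H - T" "C \<noteq> {}" "saturated H C" "induced_connected E C"
    "induced_connected E (T \<union> C)"
    using adjacent_run[OF H(1,2,4) TH] .
  have "T \<union> C = H"
  proof (rule ccontr)
    assume "T \<union> C \<noteq> H"
    then have "T \<union> C \<in> ?F" using TH C saturated_Un[OF TH(4) C(3)] by auto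
    then have "T = T \<union> C" using T_max by blast
    then show False using C(1,2) by blast
  qed
  then have "H - T = C" using C(1) by blast
  then show ?thesis using that[OF TH] C(4) by simp
qed

subsection \<open>Recombination moves along the cycle\<close>

lemma recombine:
  assumes P: "BCP V E k s P" and s: "real n / real k \<le> s"
    and AB: "A \<in> P" "B \<in> P" "A \<noteq> B"
    and TR: "T \<union> R = A \<union> B" "T \<inter> R = {}" "T \<noteq> {}" "R \<noteq> {}"
    and conn: "induced_connected E T" "induced_connected E R"
    and small: "card T \<le> card B" "card R \<le> card B"
  defines "Q \<equiv> P - {A, B} \<union> {T, R}"
  shows "Q \<noteq> P \<Longrightarrow> recomb_move V E k s P Q"
    and "num_fragments V c Q + card (fragments V c A) + card (fragments V c B)
       = num_fragments V c P + card (fragments V c T) + card (fragments V c R)"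
proof -
  have BCP: "BCP V E k s Q" unfolding Q_def using BCP_recombine[OF assms(1-13)] .
  then show "Q \<noteq> P \<Longrightarrow> recomb_move V E k s P Q"
    unfolding recomb_move_def Q_def using AB TR(1) by blast
  have part: "partition_on V P" using P unfolding BCP_def by simp
  then have "finite P" using finite_elements[OF finite_V] by blast
  moreover have "T \<noteq> R" using TR(2,3) by auto
  moreover have "T \<notin> P - {A, B}" "R \<notin> P - {A, B}"
    using new_part_notin_others[OF part AB(1,2)] TR(1,3,4) by auto
  ultimately show "num_fragments V c Q + card (fragments V c A) + card (fragments V c B)
       = num_fragments V c P + card (fragments V c T) + card (fragments V c R)"
    unfolding num_fragments_def Q_def by (rule sum_recombine[OF _ AB])
qed

lemma card_fragments_insert_pred:
  assumes W: "W \<subseteq> V" and u: "u \<in> V" "u \<notin> W" "succ u \<in> W" "insert u W \<noteq> V"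
  shows "card (fragments V c (insert u W)) \<le> card (fragments V c W)"
proof -
  let ?H = "insert u W"
  have start: "succ u \<in> W - succ ` W" using succ_notin_image W u by blast
  have fin: "finite (W - succ ` W)" using finite_subset[OF W finite_V] by simp
  have "?H - succ ` ?H \<subseteq> insert u (W - succ ` W - {succ u})" by auto
  then have "card (?H - succ ` ?H) \<le> card (insert u (W - succ ` W - {succ u}))"
    using fin by (intro card_mono) auto
  also have "\<dots> \<le> Suc (card (W - succ ` W - {succ u}))" using fin by (simp add: card_insert_if)
  also have "\<dots> = card (W - succ ` W)"
  proof -
    have "0 < card (W - succ ` W)" using start fin card_gt_0_iff by blast
    then show ?thesis using start fin by (simp add: card_Diff_singleton)
  qed
  finally have "card (?H - succ ` ?H) \<le> card (W - succ ` W)" .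
  moreover have "W \<noteq> V" using u(1,2) by blast
  ultimately show ?thesis
    using card_fragments[of ?H] card_fragments[of W] W u by simp
qed

lemma contiguous_tail:
  assumes "x \<in> V" "x \<notin> W" "W \<noteq> {}" "insert x W = arc x (Suc m)" "m < n"
  shows "contiguous n c W"
proof -
  have "insert x W = insert x (arc (succ x) m)" using assms(4) by (simp add: arc_Suc_succ)
  then have "W = arc (succ x) m"
    using assms(1,2,5) start_notin_arc_succ by (metis insert_ident)
  moreover have "m \<noteq> 0" using assms(3) calculation by (auto simp: arc_def)
  ultimately show ?thesis using contiguous_arc[OF succ_in[OF assms(1)]] assms(5) by simp
qed

lemma split_contiguous:
  assumes H: "contiguous n c H" "H \<noteq> V" and u: "u \<in> H" "u \<in> succ ` H"
  obtains T R where "T \<union> R = H" "T \<inter> R = {}" "T \<noteq> {}" "R \<noteq> {}"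
    "contiguous n c T" "contiguous n c R" "induced_connected E T" "induced_connected E R"
proof -
  obtain a L where aL: "a \<in> V" "1 \<le> L" "L \<le> n" "H = arc a L"
    using H(1) contiguous_iff_arc by auto
  have "L \<noteq> n" using arc_n aL H(2) by auto
  then have L: "L < n" using aL by simp
  obtain i where i: "i < L" "u = (succ ^^ i) a" using u(1) aL(4) mem_arc_iff by auto
  have "i \<noteq> 0"
  proof
    assume "i = 0"
    obtain j where "j < L" "u = succ ((succ ^^ j) a)" using u(2) aL(4) mem_arc_iff by auto
    then have "(succ ^^ Suc j) a = (succ ^^ 0) a" using i \<open>i = 0\<close> by simp
    then show False using succ_pow_inj[OF aL(1), of "Suc j" 0] \<open>j < L\<close> L by simp
  qed
  have TR: "arc a i \<union> arc u (L - i) = H" "arc a i \<inter> arc u (L - i) = {}"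
    using arc_split[OF aL(1) less_imp_le[OF i(1)] aL(3), folded i(2)] aL(4) by simp_all
  have "1 \<le> i" "1 \<le> L - i" using i(1) \<open>i \<noteq> 0\<close> by auto
  moreover have "u \<in> V" using u(1) aL(1,4) arc_subset by blast
  ultimately show ?thesis
    using that[OF TR] start_in_arc contiguous_arc induced_connected_arc aL(1,3) by auto
qed

lemma split_merged_district:
  assumes W: "W \<subseteq> V" "induced_connected E W" "succ u \<in> W" "\<not> contiguous n c W"
    and u: "u \<in> V" "u \<notin> W"
  obtains T R where "T \<union> R = insert u W" "T \<inter> R = {}" "T \<noteq> {}" "R \<noteq> {}"
    "induced_connected E T" "induced_connected E R"
    "card (fragments V c T) + card (fragments V c R) < 1 + card (fragments V c W)"
proof -
  let ?H = "insert u W"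
  have HV: "?H \<subseteq> V" using W u by simp
  have W_ne: "W \<noteq> {}" using W(3) by blast
  have conn: "induced_connected E ?H"
    using induced_connected_Un[OF induced_connected_singleton W(2), where a = u and b = "succ u"]
      E_succ[OF u(1)] E_sym W(3) by simp
  have "?H \<noteq> V"
  proof
    assume "?H = V"
    then have "?H = arc u (Suc (n - 1))" using arc_n[OF u(1)] three_le_n by simp
    from contiguous_tail[OF u W_ne this] show False using W(4) three_le_n by simp
  qed
  show ?thesis
  proof (cases "contiguous n c ?H")
    case False
    then obtain T where T: "T \<subseteq> ?H" "T \<noteq> {}" "T \<noteq> ?H" "saturated ?H T"
      "induced_connected E T" "induced_connected E (?H - T)"
      using saturated_split[OF HV \<open>?H \<noteq> V\<close> _ conn] by blast
    have "card (fragments V c T) + card (fragments V c (?H - T)) = card (fragments V c ?H)"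
      using card_fragments_saturated[OF HV \<open>?H \<noteq> V\<close> T(1,4)] .
    also have "\<dots> \<le> card (fragments V c W)"
      using card_fragments_insert_pred W u \<open>?H \<noteq> V\<close> by blast
    finally show ?thesis using that[of T "?H - T"] T by auto
  next
    case True
    have "u \<in> succ ` ?H"
    proof (rule ccontr)
      assume "u \<notin> succ ` ?H"
      then have "?H = arc u (Suc (card W))"
        using contiguous_eq_arc_start[OF True] finite_subset[OF W(1) finite_V] u(2) by simp
      moreover have "card ?H < n" using psubset_card_mono[OF finite_V] HV \<open>?H \<noteq> V\<close> by blast
      then have "card W < n" using finite_subset[OF W(1) finite_V] u(2) by simp
      ultimately show False using contiguous_tail[OF u W_ne] W(4) by blast
    qed
    then obtain T R where "T \<union> R = ?H" "T \<inter> R = {}" "T \<noteq> {}" "R \<noteq> {}"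
      "contiguous n c T" "contiguous n c R" "induced_connected E T" "induced_connected E R"
      using split_contiguous[OF True \<open>?H \<noteq> V\<close>] by blast
    moreover have "2 \<le> card (fragments V c W)" using two_le_card_fragments W W_ne by blast
    ultimately show ?thesis using that fragments_contiguous by simp
  qed
qed

lemma merge_split_move:
  assumes P: "BCP V E k s P" and s: "real n / real k \<le> s"
    and u: "{u} \<in> P" and W: "W \<in> P" "succ u \<in> W" "\<not> contiguous n c W"
  obtains Q where "recomb_move V E k s P Q" "num_fragments V c Q < num_fragments V c P"
proof -
  have uV: "u \<in> V" using BCP_districtD[OF P u] by simp
  have "{u} \<noteq> W" using W(3) contiguous_singleton[OF uV] by auto
  then have uW: "u \<notin> W" using BCP_district_unique[OF P u W(1)] by blast
  have W': "W \<subseteq> V" "induced_connected E W" using BCP_districtD[OF P W(1)] by auto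
  obtain T R where TR: "T \<union> R = insert u W" "T \<inter> R = {}" "T \<noteq> {}" "R \<noteq> {}"
    and conn: "induced_connected E T" "induced_connected E R"
    and fewer: "card (fragments V c T) + card (fragments V c R) < 1 + card (fragments V c W)"
    using split_merged_district[OF W'(1,2) W(2,3) uV uW] by blast
  have finW: "finite W" using W'(1) finite_V by (rule finite_subset)
  have small: "card T \<le> card W" "card R \<le> card W"
    using card_le_of_split_insert[OF finW uW] TR by (auto simp: Un_commute Int_commute)
  define Q where "Q = P - {{u}, W} \<union> {T, R}"
  note move = recombine[OF P s u W(1) \<open>{u} \<noteq> W\<close> _ TR(2-4) conn small, folded Q_def]
  have "card (fragments V c {u}) = 1" using fragments_contiguous contiguous_singleton uV by simp
  then have "num_fragments V c Q < num_fragments V c P" using move(2) TR(1) fewer by simp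
  then show ?thesis using that move(1) TR(1) by auto
qed

lemma swap_move:
  assumes P: "BCP V E k s P" and s: "real n / real k \<le> s"
    and u: "{u} \<in> P" and W: "W \<in> P" "succ u \<in> W" "contiguous n c W" "2 \<le> card W"
  defines "m \<equiv> card W"
  defines "Q \<equiv> P - {{u}, W} \<union> {{(succ ^^ m) u}, arc u m}"
  shows "W = arc (succ u) m" "recomb_move V E k s P Q"
    "num_fragments V c Q = num_fragments V c P"
proof -
  have uV: "u \<in> V" using BCP_districtD[OF P u] by simp
  have "{u} \<noteq> W" using W(4) by auto
  then have uW: "u \<notin> W" using BCP_district_unique[OF P u W(1)] by blast
  have WV: "W \<subseteq> V" using BCP_districtD[OF P W(1)] by simp
  have "m \<le> card (V - {u})" unfolding m_def using WV uW finite_V by (intro card_mono) auto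
  then have m: "m < n" using uV finite_V three_le_n by (simp add: card_Diff_singleton)
  show W_arc: "W = arc (succ u) m"
    unfolding m_def using contiguous_eq_arc_start[OF W(3,2)] succ_notin_image[OF uV WV uW] .
  let ?e = "(succ ^^ m) u"
  have TR: "{?e} \<union> arc u m = {u} \<union> W"
    using arc_Suc[of u m] arc_Suc_succ[of u m] W_arc by simp
  have e_notin: "?e \<notin> arc u m"
  proof
    assume "?e \<in> arc u m"
    then obtain i where "i < m" "?e = (succ ^^ i) u" using mem_arc_iff by auto
    then show False using succ_pow_inj[OF uV m, of i] m by simp
  qed
  have card_R: "card (arc u m) = m" using card_arc uV m by simp
  have R_contig: "contiguous n c (arc u m)" using contiguous_arc uV W(4) m m_def by simp
  note move = recombine[OF P s u W(1) \<open>{u} \<noteq> W\<close> TR _ _ _ induced_connected_singleton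
      induced_connected_arc[OF uV], folded Q_def]
  have "?e \<noteq> u" using succ_pow_inj[OF uV, of m 0] m W(4) m_def by auto
  moreover have "arc u m \<noteq> {u}" using card_R W(4) m_def by auto
  ultimately have "{u} \<notin> Q" unfolding Q_def by auto
  moreover have R_ne: "arc u m \<noteq> {}" using card_R W(4) m_def by auto
  ultimately show "recomb_move V E k s P Q" using move(1) e_notin card_R m_def u W(4) by auto
  have "card (fragments V c X) = 1" if "contiguous n c X" for X
    using fragments_contiguous[OF that] by simp
  then show "num_fragments V c Q = num_fragments V c P"
    using move(2) e_notin card_R R_ne m_def W(3,4) R_contig contiguous_singleton[OF uV]
      contiguous_singleton[OF succ_pow_in[OF uV]] by simp
qed

definition reducible_in :: "nat \<Rightarrow> real \<Rightarrow> 'a set set \<Rightarrow> nat \<Rightarrow> bool" where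
  "reducible_in k s P l \<longleftrightarrow> (\<exists>ps. ps \<noteq> [] \<and> hd ps = P \<and> length ps - 1 \<le> l \<and>
     successively (recomb_move V E k s) ps \<and> num_fragments V c (last ps) < num_fragments V c P)"

lemma reducible_in_mono: "reducible_in k s P l \<Longrightarrow> l \<le> l' \<Longrightarrow> reducible_in k s P l'"
  unfolding reducible_in_def by auto

lemma reducible_in_move:
  "recomb_move V E k s P Q \<Longrightarrow> num_fragments V c Q < num_fragments V c P \<Longrightarrow> reducible_in k s P 1"
  unfolding reducible_in_def by (intro exI[of _ "[P, Q]"]) simp

lemma reducible_in_Cons:
  assumes "recomb_move V E k s P Q" "num_fragments V c Q = num_fragments V c P"
    "reducible_in k s Q l"
  shows "reducible_in k s P (Suc l)"
proof -
  obtain ps where "ps \<noteq> []" "hd ps = Q" "length ps - 1 \<le> l"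
    "successively (recomb_move V E k s) ps" "num_fragments V c (last ps) < num_fragments V c Q"
    using assms(3) unfolding reducible_in_def by blast
  then show ?thesis
    unfolding reducible_in_def using assms(1,2)
    by (intro exI[of _ "P # ps"]) (auto simp: successively_Cons)
qed

definition passed :: "'a set set \<Rightarrow> 'a \<Rightarrow> nat \<Rightarrow> 'a set set" where
  "passed P u J = {Z \<in> P. \<exists>j. 1 \<le> j \<and> j < J \<and> (succ ^^ j) u \<in> Z}"

lemma passed_succ: "passed P (succ u) (J - 1) \<subseteq> passed P u J"
  unfolding passed_def
  by (auto simp: succ_pow_succ simp del: funpow.simps intro!: exI[of _ "Suc _"])

lemma passed_after_swap:
  assumes u: "u \<in> V" and m: "m < J" "J < n"
  shows "passed (P - {{u}, W} \<union> {{(succ ^^ m) u}, arc u m}) ((succ ^^ m) u) (J - m)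
    \<subseteq> passed P u J - {W}"
proof
  fix Z assume "Z \<in> passed (P - {{u}, W} \<union> {{(succ ^^ m) u}, arc u m}) ((succ ^^ m) u) (J - m)"
  then obtain j where Z: "Z \<in> P - {{u}, W} \<union> {{(succ ^^ m) u}, arc u m}" "1 \<le> j" "j < J - m"
    "(succ ^^ (j + m)) u \<in> Z"
    unfolding passed_def by (auto simp: funpow_add)
  have far: "(succ ^^ (j + m)) u \<noteq> (succ ^^ i) u" if "i \<le> m" for i
  proof
    assume "(succ ^^ (j + m)) u = (succ ^^ i) u"
    moreover have "j + m < n" "i < n" using Z(3) m that by linarith+
    ultimately show False using succ_pow_inj[OF u] Z(2) that by fastforce
  qed
  have "Z \<noteq> {(succ ^^ m) u}" using Z(4) far[of m] by auto
  moreover have "Z \<noteq> arc u m"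
  proof
    assume "Z = arc u m"
    then obtain i where "i < m" "(succ ^^ (j + m)) u = (succ ^^ i) u"
      using Z(4) mem_arc_iff by blast
    then show False using far[of i] by simp
  qed
  then show "Z \<in> passed P u J - {W}"
    unfolding passed_def using Z calculation by (auto intro!: exI[of _ "j + m"])
qed

lemma finite_passed: "BCP V E k s P \<Longrightarrow> finite (passed P u J)"
  unfolding passed_def BCP_def using finite_elements[OF finite_V] by auto

lemma swap_step:
  assumes P: "BCP V E k s P" and s: "real n / real k \<le> s" and u: "{u} \<in> P"
    and J: "1 \<le> J" "J < n"
    and W: "W \<in> P" "succ u \<in> W" "contiguous n c W" "2 \<le> card W"
    and Z: "Z \<in> P" "(succ ^^ J) u \<in> Z" "\<not> contiguous n c Z"
  obtains Q e J' where "recomb_move V E k s P Q" "num_fragments V c Q = num_fragments V c P"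
    "{e} \<in> Q" "1 \<le> J'" "J' < J" "Z \<in> Q" "(succ ^^ J') e \<in> Z"
    "passed Q e J' \<subseteq> passed P u J - {W}"
proof -
  have uV: "u \<in> V" using BCP_districtD[OF P u] by simp
  define m where "m = card W"
  define e where "e = (succ ^^ m) u"
  define Q where "Q = P - {{u}, W} \<union> {{e}, arc u m}"
  have swap: "W = arc (succ u) m" "recomb_move V E k s P Q"
    "num_fragments V c Q = num_fragments V c P"
    using swap_move[OF P s u W] unfolding m_def e_def Q_def by auto
  have "m < J"
  proof (rule ccontr)
    assume "\<not> m < J"
    then have "(succ ^^ (J - 1)) (succ u) \<in> W" using swap(1) J(1) succ_pow_in_arc by simp
    then have "(succ ^^ J) u \<in> W" using J(1) by (simp add: succ_pow_succ)
    then show False using BCP_district_unique[OF P W(1) Z(1)] Z(2,3) W(3) by auto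
  qed
  have "Z \<noteq> {u}" "Z \<noteq> W" using Z(3) W(3) contiguous_singleton[OF uV] by auto
  then have "Z \<in> Q" unfolding Q_def using Z(1) by simp
  moreover have "(succ ^^ (J - m)) e = (succ ^^ J) u"
    using \<open>m < J\<close> unfolding e_def by (metis comp_apply funpow_add le_add_diff_inverse2 less_imp_le)
  moreover have "passed Q e (J - m) \<subseteq> passed P u J - {W}"
    unfolding Q_def e_def using passed_after_swap[OF uV \<open>m < J\<close> J(2)] .
  moreover have "{e} \<in> Q" "1 \<le> J - m" "J - m < J" using \<open>m < J\<close> W(4) m_def Q_def by auto
  ultimately show ?thesis using that[OF swap(2,3)] Z(2) by simp
qed

lemma walk:
  assumes s: "real n / real k \<le> s"
  shows "BCP V E k s P \<Longrightarrow> {u} \<in> P \<Longrightarrow> 1 \<le> J \<Longrightarrow> J < n \<Longrightarrow>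
    \<forall>Y\<in>passed P u J. contiguous n c Y \<Longrightarrow>
    Z \<in> P \<Longrightarrow> (succ ^^ J) u \<in> Z \<Longrightarrow> \<not> contiguous n c Z \<Longrightarrow>
    reducible_in k s P (card (passed P u J) + 1)"
proof (induction J arbitrary: P u rule: less_induct)
  case (less J P u)
  note P = less.prems(1) and u = less.prems(2) and J = less.prems(3,4)
    and clear = less.prems(5) and Z = less.prems(6-8)
  obtain W where W: "W \<in> P" "succ u \<in> W"
    using BCP_obtain_district[OF P succ_in] BCP_districtD[OF P u] by blast
  show ?case
  proof (cases "J = 1")
    case True
    then have "W = Z" using BCP_district_unique[OF P W(1) Z(1)] W(2) Z(2) by simp
    then obtain Q where "recomb_move V E k s P Q" "num_fragments V c Q < num_fragments V c P"
      using merge_split_move[OF P s u W(1,2)] Z(3) by blast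
    then show ?thesis using reducible_in_mono[OF reducible_in_move] by simp
  next
    case False
    have W_passed: "W \<in> passed P u J"
      unfolding passed_def using W J False by (auto intro!: exI[of _ 1])
    have fin: "finite (passed P u J)" using finite_passed[OF P] .
    show ?thesis
    proof (cases "2 \<le> card W")
      case False
      have "finite W" "W \<noteq> {}" using BCP_districtD[OF P W(1)] finite_V finite_subset by auto
      then have "0 < card W" by (simp add: card_gt_0_iff)
      then have "card W = 1" using False by linarith
      then have "{succ u} \<in> P" using W by (metis card_1_singletonE singletonD)
      moreover have "\<forall>Y\<in>passed P (succ u) (J - 1). contiguous n c Y"
        using clear passed_succ by blast
      moreover have "(succ ^^ (J - 1)) (succ u) = (succ ^^ J) u"
        using J(1) by (simp add: succ_pow_succ)
      ultimately have "reducible_in k s P (card (passed P (succ u) (J - 1)) + 1)"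
        using less.IH[of "J - 1", OF _ P] J \<open>J \<noteq> 1\<close> Z by simp
      then show ?thesis using reducible_in_mono card_mono[OF fin passed_succ] by simp
    next
      case True
      obtain Q e J' where move: "recomb_move V E k s P Q"
          "num_fragments V c Q = num_fragments V c P"
        and Q: "{e} \<in> Q" "1 \<le> J'" "J' < J" "Z \<in> Q" "(succ ^^ J') e \<in> Z"
        and sub: "passed Q e J' \<subseteq> passed P u J - {W}"
        using swap_step[OF P s u J W(1,2) _ True Z] W_passed clear by blast
      have "\<forall>Y\<in>passed Q e J'. contiguous n c Y" using clear sub by blast
      then have "reducible_in k s Q (card (passed Q e J') + 1)"
        using less.IH[OF Q(3) _ Q(1,2)] move(1) Q J(2) Z(3) unfolding recomb_move_def by simp
      then have "reducible_in k s P (card (passed Q e J') + 2)"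
        using reducible_in_Cons[OF move] by simp
      moreover have "card (passed Q e J') < card (passed P u J)"
        using card_mono[OF _ sub] card_Diff1_less[OF fin W_passed] fin by fastforce
      ultimately show ?thesis using reducible_in_mono by simp
    qed
  qed
qed

lemma first_noncontiguous_district:
  assumes P: "BCP V E k s P" and v: "{v} \<in> P" and nc: "\<not> canonical V c P"
  obtains J Z where "1 \<le> J" "J < n" "\<forall>Y\<in>passed P v J. contiguous n c Y"
    "Z \<in> P" "(succ ^^ J) v \<in> Z" "\<not> contiguous n c Z"
proof -
  let ?bad = "\<lambda>j. 1 \<le> j \<and> (\<exists>Z\<in>P. (succ ^^ j) v \<in> Z \<and> \<not> contiguous n c Z)"
  have vV: "v \<in> V" using BCP_districtD[OF P v] by simp
  obtain D where D: "D \<in> P" "\<not> contiguous n c D" using nc unfolding canonical_def by auto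
  then obtain d where "d \<in> D" using BCP_districtD[OF P] by blast
  moreover have "d \<in> V" using BCP_districtD[OF P D(1)] calculation by blast
  ultimately obtain j where j: "j < n" "(succ ^^ j) v \<in> D" using succ_pow_surj[OF vV] by metis
  have "j \<noteq> 0"
  proof
    assume "j = 0"
    then have "D = {v}" using BCP_district_unique[OF P D(1) v] j(2) by simp
    then show False using D(2) contiguous_singleton[OF vV] by simp
  qed
  then have "?bad j" using j D by auto
  define J where "J = (LEAST j. ?bad j)"
  have "?bad J" unfolding J_def using \<open>?bad j\<close> by (rule LeastI)
  moreover have "J \<le> j" unfolding J_def using \<open>?bad j\<close> by (rule Least_le)
  then have "J < n" using j(1) by simp
  moreover have "\<forall>Y\<in>passed P v J. contiguous n c Y"
    unfolding passed_def J_def using not_less_Least by blast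
  ultimately show ?thesis using that by blast
qed

lemma card_passed_le:
  assumes P: "BCP V E k s P" and v: "{v} \<in> P" and J: "J < n"
    and clear: "\<forall>Y\<in>passed P v J. contiguous n c Y" and Z: "Z \<in> P" "\<not> contiguous n c Z"
  shows "card (passed P v J) + 2 \<le> k"
proof -
  have vV: "v \<in> V" using BCP_districtD[OF P v] by simp
  have "{v} \<notin> passed P v J"
  proof
    assume "{v} \<in> passed P v J"
    then obtain j where "1 \<le> j" "j < J" "(succ ^^ j) v = (succ ^^ 0) v"
      unfolding passed_def by auto
    then show False using succ_pow_inj[OF vV, of j 0] J by simp
  qed
  moreover have "Z \<notin> passed P v J" using clear Z(2) by blast
  ultimately have "passed P v J \<subseteq> P - {{v}, Z}" unfolding passed_def by blast
  moreover have "finite P" using P finite_elements[OF finite_V] unfolding BCP_def by blast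
  moreover have "{v} \<noteq> Z" using Z(2) contiguous_singleton[OF vV] by auto
  moreover have "card {{v}, Z} \<le> card P" using calculation(2) v Z(1) by (intro card_mono) auto
  ultimately have "card (passed P v J) \<le> k - 2" "2 \<le> k"
    using card_mono[of "P - {{v}, Z}" "passed P v J"] v Z(1) P unfolding BCP_def
    by (simp_all add: card_Diff_subset)
  then show ?thesis by linarith
qed

lemma singleton_district_reducible:
  assumes P: "BCP V E k s P" and s: "real n / real k \<le> s"
    and v: "{v} \<in> P" and nc: "\<not> canonical V c P"
  shows "reducible_in k s P (k - 1)"
proof -
  obtain J Z where J: "1 \<le> J" "J < n" "\<forall>Y\<in>passed P v J. contiguous n c Y"
    and Z: "Z \<in> P" "(succ ^^ J) v \<in> Z" "\<not> contiguous n c Z"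
    using first_noncontiguous_district[OF P v nc] .
  have "reducible_in k s P (card (passed P v J) + 1)" using walk[OF s P v J Z] .
  moreover have "card (passed P v J) + 2 \<le> k" using card_passed_le[OF P v J(2,3) Z(1,3)] .
  ultimately show ?thesis using reducible_in_mono by simp
qed

end

theorem mainTheorem8:
  fixes V :: "'a set" and E :: "'a \<Rightarrow> 'a \<Rightarrow> bool" and c :: "nat \<Rightarrow> 'a"
    and k :: nat and s :: real and P :: "'a set set"
  assumes "graph V E"
    and "hamilton_cycle V E c"
    and "k \<ge> 2" and "k dvd card V"
    and "s \<ge> real (card V) / real k"
    and "BCP V E k s P"
    and "\<not> canonical V c P"
    and "\<exists>U\<in>P. card U = 1"
  shows "\<exists>ps. ps \<noteq> [] \<and> hd ps = P \<and> length ps - 1 \<le> k - 1 \<and>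
           (\<forall>i < length ps - 1. recomb_move V E k s (ps ! i) (ps ! Suc i)) \<and>
           num_fragments V c (last ps) < num_fragments V c P"
proof -
  interpret hamiltonian_graph V E c using assms(1,2) by unfold_locales
  obtain v where "{v} \<in> P" using assms(8) by (auto simp: card_1_singleton_iff)
  then have "reducible_in k s P (k - 1)"
    using singleton_district_reducible assms(5-7) by blast
  then show ?thesis unfolding reducible_in_def successively_iff_nth by blast
qed

end
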